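(* Let $\mathbf{a}_1,\mathbf{a}_2\in G$ with $\mathbf{a}_i\in G(t_i)$, where $t_i=\kappa_i+\kappa_i^{-1}$, $i=1,2$. (a) If $\mathbf{a}_1\mathbf{a}_2=\mathbf{d}(\lambda)$ with $\lambda\notin\{\pm1,\ \kappa_1\kappa_2,\ \kappa_1\kappa_2^{-1},\ \kappa_1^{-1}\kappa_2,\ \kappa_1^{-1}\kappa_2^{-1}\}$, then there exists $\mu\neq0$ such that $\mathbf{a}_1=\mathbf{h}^{\lambda}_{t_1,t_2}(-\lambda\mu)$ and $\mathbf{a}_2=\mathbf{h}^{\lambda}_{t_2,t_1}(\mu)$. (b) If $\mathbf{a}_1\mathbf{a}_2=\mathbf{d}(\kappa_1^{\epsilon_1}\kappa_2^{\epsilon_2})$ with $\epsilon_1,\epsilon_2\in\{\pm1\}$ and $\kappa_1^{\epsilon_1}\kappa_2^{\epsilon_2}\neq\pm1$, then either $\mathbf{a}_1=\mathbf{u}^+(\kappa_1^{\epsilon_1},-\kappa_1^{\epsilon_1}\alpha)$, $\mathbf{a}_2=\mathbf{u}^+(\kappa_2^{\epsilon_2},\kappa_2^{-\epsilon_2}\alpha)$ for some $\alpha\in\mathbb{C}$, or $\mathbf{a}_1=\mathbf{u}^-(\kappa_1^{\epsilon_1},-\kappa_1^{-\epsilon_1}\alpha)$, $\mathbf{a}_2=\mathbf{u}^-(\kappa_2^{\epsilon_2},\kappa_2^{\epsilon_2}\alpha)$ for some $\alpha\in\mathbb{C}$. (c) If $\mathbf{a}_1\mathbf{a}_2=-\mathbf{p}$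 and $t_1+t_2=0$, then $\mathbf{a}_1=\mathbf{u}^+(-\kappa_2^{-\epsilon},\xi)$ and $\mathbf{a}_2=\mathbf{u}^+(\kappa_2^{\epsilon},\xi+\kappa_2^{\epsilon})$ for some $\xi\in\mathbb{C}$ and $\epsilon\in\{\pm1\}$. (d) If $\mathbf{a}_1\mathbf{a}_2=-\mathbf{p}$ and $t_1+t_2\neq0$, then $\mathbf{a}_1=\mathbf{k}_{t_1,t_2}(\alpha+(t_1+t_2)/2)$ and $\mathbf{a}_2=\mathbf{k}_{t_2,t_1}(\alpha)$ for some $\alpha\in\mathbb{C}$. (e) Let $\tau=\mathrm{tr}(\mathbf{a}_1\mathbf{a}_2)$. Then the pair $(\mathbf{a}_1,\mathbf{a}_2)$ is reducible if and only if $\tau^2-t_1t_2\tau+t_1^2+t_2^2-4=0$.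
   Context: $G=\mathrm{SL}(2,\mathbb{C})$, $G(t)=\{\mathbf{x}\in G:\mathrm{tr}(\mathbf{x})=t\}$. A pair $(\mathbf{a},\mathbf{b})\in G\times G$ is reducible if $\mathbf{a},\mathbf{b}$ have a common eigenvector. Notation: $\mathbf{p}=\begin{pmatrix}1&1\\0&1\end{pmatrix}$, $\mathbf{d}(\lambda)=\begin{pmatrix}\lambda&0\\0&\lambda^{-1}\end{pmatrix}$, $\mathbf{u}^+(\kappa,\xi)=\begin{pmatrix}\kappa&\xi\\0&\kappa^{-1}\end{pmatrix}$, $\mathbf{u}^-(\kappa,\xi)=\begin{pmatrix}\kappa&0\\\xi&\kappa^{-1}\end{pmatrix}$. For $\lambda\neq\pm1$ and $\mu\neq0$, $\mathbf{h}^{\lambda}_{t_1,t_2}(\mu)=\frac{1}{\lambda-\lambda^{-1}}\begin{pmatrix}\lambda t_1-t_2&\mu\\ \delta\mu^{-1}& t_2-\lambda^{-1}t_1\end{pmatrix}$, where $\delta=(\lambda+\lambda^{-1})t_1t_2-t_1^2-t_2^2-(\lambda-\lambda^{-1})^2$ (symmetric in $t_1,t_2$). For $t_1+t_2\neq0$, $\mathbf{k}_{t_1,t_2}(\alpha)=\begin{pmatrix}\alpha+t_1/2&(t_1+t_2)^{-1}(t_1^2/4-1-\alpha^2)\\ t_1+t_2&-\alpha+t_1/2\end{pmatrix}$. *)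

theory Defs
  imports "HOL-Analysis.Analysis"
begin

definition mat2 :: "complex \<Rightarrow> complex \<Rightarrow> complex \<Rightarrow> complex \<Rightarrow> complex^2^2" where
  "mat2 a b c d = (\<chi> i j. if i = 1 then (if j = 1 then a else b) else (if j = 1 then c else d))"

definition SL2 :: "(complex^2^2) set" where
  "SL2 = {x. det x = 1}"

definition SL2_tr :: "complex \<Rightarrow> (complex^2^2) set" where
  "SL2_tr t = {x \<in> SL2. trace x = t}"

definition reducible_pair :: "complex^2^2 \<Rightarrow> complex^2^2 \<Rightarrow> bool" where
  "reducible_pair a b \<longleftrightarrow>
     (\<exists>v :: complex^2. v \<noteq> 0 \<and> (\<exists>l1 l2. a *v v = l1 *s v \<and> b *v v = l2 *s v))"

definition matP :: "complex^2^2" where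
  "matP = mat2 1 1 0 1"

definition matD :: "complex \<Rightarrow> complex^2^2" where
  "matD l = mat2 l 0 0 (inverse l)"

definition uplus :: "complex \<Rightarrow> complex \<Rightarrow> complex^2^2" where
  "uplus \<kappa> \<xi> = mat2 \<kappa> \<xi> 0 (inverse \<kappa>)"

definition uminus2 :: "complex \<Rightarrow> complex \<Rightarrow> complex^2^2" where
  "uminus2 \<kappa> \<xi> = mat2 \<kappa> 0 \<xi> (inverse \<kappa>)"

definition hdelta :: "complex \<Rightarrow> complex \<Rightarrow> complex \<Rightarrow> complex" where
  "hdelta l t1 t2 = (l + inverse l) * t1 * t2 - t1^2 - t2^2 - (l - inverse l)^2"

definition matH :: "complex \<Rightarrow> complex \<Rightarrow> complex \<Rightarrow> complex \<Rightarrow> complex^2^2" where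
  "matH l t1 t2 \<mu> = (let s = inverse (l - inverse l) in
     mat2 (s * (l * t1 - t2)) (s * \<mu>) (s * (hdelta l t1 t2 * inverse \<mu>)) (s * (t2 - inverse l * t1)))"

definition matK :: "complex \<Rightarrow> complex \<Rightarrow> complex \<Rightarrow> complex^2^2" where
  "matK t1 t2 \<alpha> = mat2 (\<alpha> + t1 / 2) (inverse (t1 + t2) * (t1^2 / 4 - 1 - \<alpha>^2))
                        (t1 + t2) (- \<alpha> + t1 / 2)"

end

theory Submission
  imports Defs
begin

(*
  Since det a1 = 1, the product determines the second factor: a2 = adj(a1) (a1 a2). For a
  diagonal product d(l) the two trace conditions then fix the diagonal of a1 as a linear
  function of t1 and t2, and the off-diagonal entries are tied together only by the
  determinant, which gives the matrices h; a1 is triangular exactly when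
  l = kappa1^(+-1) kappa2^(+-1), which gives the matrices u+ and u-. For the product -p the
  lower left entry of a1 is forced to be t1 + t2, which gives the matrices k, or triangular
  factors when t1 + t2 = 0.

  For (e), a common eigenvector of a1 and a2 lies in the kernel of C = a1 a2 - a2 a1, so
  det C = 0. Conversely, if det C = 0 then the traceless C is nilpotent, and a kernel vector
  of C is a common eigenvector (this uses tr (a1 C) = tr (a2 C) = 0), unless C = 0, where
  commuting matrices share an eigenvector. For unimodular a1, a2, det C is minus the
  polynomial tau^2 - t1 t2 tau + t1^2 + t2^2 - 4.
*)

lemma mat2_nth [simp]:
  "mat2 a b c d $ 1 $ 1 = a" "mat2 a b c d $ 1 $ 2 = b"
  "mat2 a b c d $ 2 $ 1 = c" "mat2 a b c d $ 2 $ 2 = d"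
  by (simp_all add: mat2_def)

lemma mat2_cases:
  fixes x :: "complex^2^2"
  obtains a b c d where "x = mat2 a b c d"
proof
  show "x = mat2 (x$1$1) (x$1$2) (x$2$1) (x$2$2)"
    by (simp add: mat2_def vec_eq_iff forall_2)
qed

lemma mat2_eq_iff [simp]:
  "mat2 a b c d = mat2 a' b' c' d' \<longleftrightarrow> a = a' \<and> b = b' \<and> c = c' \<and> d = d'"
  by (metis mat2_nth)

lemma mat2_eq_0_iff [simp]: "mat2 a b c d = 0 \<longleftrightarrow> a = 0 \<and> b = 0 \<and> c = 0 \<and> d = 0"
  by (simp add: mat2_def vec_eq_iff forall_2)

lemma mat2_mult [simp]:
  "mat2 a b c d ** mat2 e f g h = mat2 (a*e + b*g) (a*f + b*h) (c*e + d*g) (c*f + d*h)"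
  by (simp add: matrix_matrix_mult_def mat2_def vec_eq_iff forall_2 sum_2)

lemma mat2_diff [simp]:
  "mat2 a b c d - mat2 a' b' c' d' = mat2 (a - a') (b - b') (c - c') (d - d')"
  by (simp add: mat2_def vec_eq_iff forall_2)

lemma mat2_uminus [simp]: "- mat2 a b c d = mat2 (-a) (-b) (-c) (-d)"
  by (simp add: mat2_def vec_eq_iff forall_2)

lemma det_mat2 [simp]: "det (mat2 a b c d) = a*d - b*c"
  by (simp add: det_2)

lemma trace_mat2 [simp]: "trace (mat2 a b c d) = a + d"
  by (simp add: trace_def sum_2)

lemma mat2_in_SL2_tr_iff [simp]: "mat2 a b c d \<in> SL2_tr t \<longleftrightarrow> a*d - b*c = 1 \<and> a + d = t"
  by (simp add: SL2_tr_def SL2_def)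

definition vec2 :: "complex \<Rightarrow> complex \<Rightarrow> complex^2" where
  "vec2 x y = (\<chi> i. if i = 1 then x else y)"

lemma vec2_nth [simp]: "vec2 x y $ 1 = x" "vec2 x y $ 2 = y"
  by (simp_all add: vec2_def)

lemma vec2_cases:
  fixes v :: "complex^2"
  obtains x y where "v = vec2 x y"
proof
  show "v = vec2 (v$1) (v$2)"
    by (simp add: vec2_def vec_eq_iff forall_2)
qed

lemma vec2_eq_iff [simp]: "vec2 x y = vec2 x' y' \<longleftrightarrow> x = x' \<and> y = y'"
  by (metis vec2_nth)

lemma vec2_eq_0_iff [simp]: "vec2 x y = 0 \<longleftrightarrow> x = 0 \<and> y = 0"
  by (simp add: vec_eq_iff forall_2)

lemma mat2_mult_vec2 [simp]: "mat2 a b c d *v vec2 x y = vec2 (a*x + b*y) (c*x + d*y)"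
  by (simp add: matrix_vector_mult_def vec_eq_iff forall_2 sum_2)

lemma scalar_mult_vec2 [simp]: "l *s vec2 x y = vec2 (l*x) (l*y)"
  by (simp add: vec_eq_iff forall_2)

lemma proportional_iff_cross_eq:
  fixes x y p q :: "'a::field"
  assumes "x \<noteq> 0 \<or> y \<noteq> 0"
  shows "(\<exists>l. p = l * x \<and> q = l * y) \<longleftrightarrow> x * q = y * p"
proof
  assume "x * q = y * p"
  show "\<exists>l. p = l * x \<and> q = l * y"
  proof (cases "x = 0")
    case True
    with assms \<open>x * q = y * p\<close> show ?thesis
      by (intro exI[of _ "q / y"]) auto
  next
    case False
    with \<open>x * q = y * p\<close> show ?thesis
      by (intro exI[of _ "p / x"]) (auto simp: field_simps)
  qed
qed auto

lemma eigenvector_iff_parallel: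
  fixes M :: "complex^2^2"
  assumes "v \<noteq> 0"
  shows "(\<exists>l. M *v v = l *s v) \<longleftrightarrow> v$1 * (M *v v)$2 = v$2 * (M *v v)$1"
proof -
  obtain x y where v: "v = vec2 x y" by (rule vec2_cases)
  obtain p q where "M *v v = vec2 p q" by (rule vec2_cases)
  with assms show ?thesis
    unfolding v by (simp add: proportional_iff_cross_eq)
qed

lemma exists_eigenvector:
  fixes M :: "complex^2^2"
  obtains v l where "v \<noteq> 0" "M *v v = l *s v"
proof -
  obtain a b c d where M: "M = mat2 a b c d" by (rule mat2_cases)
  define l where "l = (a + d + csqrt ((a + d)^2 - 4 * (a*d - b*c))) / 2"
  have "l^2 - (a + d) * l + (a*d - b*c) = 0"
    unfolding l_def by (simp add: power2_eq_square field_simps) algebra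
  then have "c*b + d*(l - a) = l*(l - a)"
    by algebra
  show thesis
  proof (cases "b = 0")
    case True
    then show thesis
      using that[of "vec2 0 1" d] by (simp add: M)
  next
    case False
    with \<open>c*b + d*(l - a) = l*(l - a)\<close> show thesis
      using that[of "vec2 b (l - a)" l] by (simp add: M algebra_simps)
  qed
qed

lemma scalar_action_if_independent_eigenvectors:
  fixes M :: "complex^2^2"
  assumes "M *v v = l *s v" "M *v w = l *s w" "v$1 * w$2 \<noteq> v$2 * w$1"
  shows "M *v u = l *s u"
proof -
  obtain a b c d where M: "M = mat2 a b c d" by (rule mat2_cases)
  obtain x1 x2 where v: "v = vec2 x1 x2" by (rule vec2_cases)
  obtain y1 y2 where w: "w = vec2 y1 y2" by (rule vec2_cases)
  obtain z1 z2 where u: "u = vec2 z1 z2" by (rule vec2_cases)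
  have eqs: "a*x1 + b*x2 = l*x1" "c*x1 + d*x2 = l*x2" "a*y1 + b*y2 = l*y1" "c*y1 + d*y2 = l*y2"
    and indep: "x1*y2 - x2*y1 \<noteq> 0"
    using assms by (simp_all add: M v w)
  have "(a - l) * (x1*y2 - x2*y1) = 0" "b * (x1*y2 - x2*y1) = 0"
    "c * (x1*y2 - x2*y1) = 0" "(d - l) * (x1*y2 - x2*y1) = 0"
    using eqs by algebra+
  with indep have "a = l" "b = 0" "c = 0" "d = l"
    by simp_all
  then show ?thesis
    by (simp add: M u)
qed

lemma reducible_pair_if_commute:
  fixes A B :: "complex^2^2"
  assumes "A ** B = B ** A"
  shows "reducible_pair A B"
proof -
  obtain v l where v: "v \<noteq> 0" "A *v v = l *s v" by (rule exists_eigenvector)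
  have "A *v (B *v v) = l *s (B *v v)"
    by (metis assms matrix_vector_mul_assoc v(2) vector_scalar_commute)
  show ?thesis
  proof (cases "v$1 * (B *v v)$2 = v$2 * (B *v v)$1")
    case True
    then show ?thesis
      using v eigenvector_iff_parallel[OF v(1), of B] unfolding reducible_pair_def by blast
  next
    case False
    obtain u m where u: "u \<noteq> 0" "B *v u = m *s u" by (rule exists_eigenvector)
    have "A *v u = l *s u"
      using scalar_action_if_independent_eigenvectors[OF v(2) \<open>A *v (B *v v) = l *s (B *v v)\<close> False] .
    with u show ?thesis
      unfolding reducible_pair_def by blast
  qed
qed

lemma reducible_pairI:
  fixes A B :: "complex^2^2"
  assumes "v \<noteq> 0" "v$1 * (A *v v)$2 = v$2 * (A *v v)$1" "v$1 * (B *v v)$2 = v$2 * (B *v v)$1"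
  shows "reducible_pair A B"
  using assms eigenvector_iff_parallel[OF assms(1)] unfolding reducible_pair_def by blast

lemma reducible_pair_iff_det_commutator:
  fixes A B :: "complex^2^2"
  shows "reducible_pair A B \<longleftrightarrow> det (A ** B - B ** A) = 0"
proof
  assume "reducible_pair A B"
  then obtain v l1 l2 where v: "v \<noteq> 0" "A *v v = l1 *s v" "B *v v = l2 *s v"
    unfolding reducible_pair_def by blast
  then have "(A ** B - B ** A) *v v = 0"
    by (simp add: matrix_vector_mult_diff_rdistrib vector_scalar_commute
        flip: matrix_vector_mul_assoc)
  with v(1) show "det (A ** B - B ** A) = 0"
    by (metis invertible_det_nz invertible_left_inverse matrix_left_invertible_ker)
next
  assume det0: "det (A ** B - B ** A) = 0"
  obtain a b c d where A: "A = mat2 a b c d" by (rule mat2_cases)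
  obtain e f g h where B: "B = mat2 e f g h" by (rule mat2_cases)
  define n1 n2 n3 where "n1 = b*g - c*f" and "n2 = a*f + b*h - b*e - d*f"
    and "n3 = c*e + d*g - a*g - c*h"
  have C: "A ** B - B ** A = mat2 n1 n2 n3 (- n1)"
    by (simp add: A B n1_def n2_def n3_def algebra_simps)
  have res: "n1 * n1 + n2 * n3 = 0"
    using det0 by (simp add: C add_eq_0_iff)
  \<comment> \<open>\<open>trace (A ** C) = trace (B ** C) = 0\<close> for the commutator \<open>C\<close>\<close>
  have TA: "a * n1 + b * n3 + c * n2 - d * n1 = 0" and TB: "e * n1 + f * n3 + g * n2 - h * n1 = 0"
    unfolding n1_def n2_def n3_def by algebra+
  \<comment> \<open>\<open>C\<close> is nilpotent, and a kernel vector read off from a nonzero row is a common eigenvector\<close>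
  consider "n1 \<noteq> 0 \<or> n2 \<noteq> 0" | "n3 \<noteq> 0" | "A ** B - B ** A = 0"
    unfolding C by auto
  then show "reducible_pair A B"
  proof cases
    case 1
    have "n2 * (c * n2 + d * - n1) = - n1 * (a * n2 + b * - n1)"
      "n2 * (g * n2 + h * - n1) = - n1 * (e * n2 + f * - n1)"
      using res TA TB by algebra+
    with 1 show ?thesis
      by (intro reducible_pairI[of "vec2 n2 (- n1)"]) (auto simp: A B)
  next
    case 2
    have "n1 * (c * n1 + d * n3) = n3 * (a * n1 + b * n3)"
      "n1 * (g * n1 + h * n3) = n3 * (e * n1 + f * n3)"
      using res TA TB by algebra+
    with 2 show ?thesis
      by (intro reducible_pairI[of "vec2 n1 n3"]) (auto simp: A B)
  next
    case 3
    then show ?thesis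
      by (intro reducible_pair_if_commute) simp
  qed
qed

lemma det_commutator_SL2:
  fixes A B :: "complex^2^2"
  assumes "det A = 1" "det B = 1"
  shows "det (A ** B - B ** A) =
    4 - trace A ^ 2 - trace B ^ 2 + trace A * trace B * trace (A ** B) - trace (A ** B) ^ 2"
proof -
  obtain a b c d where A: "A = mat2 a b c d" by (rule mat2_cases)
  obtain e f g h where B: "B = mat2 e f g h" by (rule mat2_cases)
  from assms show ?thesis
    unfolding A B by simp algebra
qed

lemma SL2_reducible_pair_iff_traces:
  assumes "a1 \<in> SL2_tr t1" "a2 \<in> SL2_tr t2"
  shows "reducible_pair a1 a2 \<longleftrightarrow>
    (trace (a1 ** a2))^2 - t1 * t2 * trace (a1 ** a2) + t1^2 + t2^2 - 4 = 0"
proof -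
  have "det a1 = 1" "det a2 = 1" "trace a1 = t1" "trace a2 = t2"
    using assms by (simp_all add: SL2_tr_def SL2_def)
  then have "det (a1 ** a2 - a2 ** a1) =
      - ((trace (a1 ** a2))^2 - t1 * t2 * trace (a1 ** a2) + t1^2 + t2^2 - 4)"
    by (simp add: det_commutator_SL2)
  then show ?thesis
    by (simp add: reducible_pair_iff_det_commutator)
qed

lemma plus_inverse_eq_plus_inverse_iff:
  fixes x \<kappa> :: "'a::field"
  assumes "x \<noteq> 0" "\<kappa> \<noteq> 0"
  shows "x + inverse x = \<kappa> + inverse \<kappa> \<longleftrightarrow> x = \<kappa> \<or> x = inverse \<kappa>"
proof
  assume "x + inverse x = \<kappa> + inverse \<kappa>"
  then have "(x - \<kappa>) * (x - inverse \<kappa>) = 0"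
    using assms by (simp add: field_simps)
  then show "x = \<kappa> \<or> x = inverse \<kappa>"
    by simp
qed (use assms in auto)

lemma plus_inverse_power_int_sign:
  fixes \<kappa> :: "'a::field" and \<epsilon> :: int
  assumes "\<epsilon> \<in> {1, -1}"
  shows "\<kappa> powi \<epsilon> + inverse (\<kappa> powi \<epsilon>) = \<kappa> + inverse \<kappa>"
  using assms by (auto simp: power_int_minus)

lemma right_factor_eq_adjugate_mult:
  fixes X M :: "complex^2^2"
  assumes "a*d - b*c = 1" "mat2 a b c d ** X = M"
  shows "X = mat2 d (-b) (-c) a ** M"
proof -
  obtain e f g h where X: "X = mat2 e f g h" by (rule mat2_cases)
  have "d * (a*e + b*g) - b * (c*e + d*g) = e" "d * (a*f + b*h) - b * (c*f + d*h) = f"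
    "a * (c*e + d*g) - c * (a*e + b*g) = g" "a * (c*f + d*h) - c * (a*f + b*h) = h"
    using assms(1) by algebra+
  then show ?thesis
    unfolding assms(2)[symmetric] X by simp
qed

lemma SL2_factors_of_diagonal:
  assumes "a1 \<in> SL2_tr t1" "a2 \<in> SL2_tr t2" "a1 ** a2 = matD l" "l \<noteq> 1" "l \<noteq> -1"
  obtains a b c d where "a1 = mat2 a b c d"
    "a2 = mat2 (d * l) (- b * inverse l) (- c * l) (a * inverse l)"
    "a*d - b*c = 1" "a + d = t1" "l \<noteq> 0" "l - inverse l \<noteq> 0"
    "a * (l - inverse l) = l * t1 - t2" "d * (l - inverse l) = t2 - inverse l * t1"
proof -
  obtain a b c d where a1: "a1 = mat2 a b c d" by (rule mat2_cases)
  have det: "a*d - b*c = 1" and tr: "a + d = t1"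
    using assms(1) by (simp_all add: a1)
  have a2: "a2 = mat2 (d * l) (- b * inverse l) (- c * l) (a * inverse l)"
    using right_factor_eq_adjugate_mult[OF det assms(3)[unfolded a1]] by (simp add: matD_def)
  have "d * l * (a * inverse l) - b * inverse l * (c * l) = 1"
    using assms(2) by (simp add: a2)
  then have "l \<noteq> 0"
    by auto
  have "l - inverse l \<noteq> 0"
  proof
    assume "l - inverse l = 0"
    with \<open>l \<noteq> 0\<close> have "(l - 1) * (l + 1) = 0"
      by (simp add: field_simps)
    with assms(4,5) show False
      by (auto simp: add_eq_0_iff equation_minus_iff)
  qed
  moreover have "d * l + a * inverse l = t2"
    using assms(2) by (simp add: a2)
  ultimately show thesis
    using that[OF a1 a2 det tr \<open>l \<noteq> 0\<close>] tr
    by (auto simp: algebra_simps)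
qed

lemma mat2_eq_matH:
  assumes "l - inverse l \<noteq> 0" "a * (l - inverse l) = l * t1 - t2"
    "d * (l - inverse l) = t2 - inverse l * t1" "a*d - b*c = 1" "b \<noteq> 0"
  shows "mat2 a b c d = matH l t1 t2 (b * (l - inverse l))"
proof -
  define z where "z = l - inverse l"
  have "l \<noteq> 0"
    using assms(1) by auto
  then have "hdelta l t1 t2 = (l * t1 - t2) * (t2 - inverse l * t1) - z^2"
    by (simp add: hdelta_def z_def field_simps power2_eq_square)
  also have "\<dots> = b * c * z^2"
    using assms(2-4) by (simp add: z_def power2_eq_square) algebra
  finally have "hdelta l t1 t2 = b * c * z^2" .
  with assms \<open>l \<noteq> 0\<close> show ?thesis
    unfolding matH_def Let_def z_def[symmetric] mat2_eq_iff
    by (auto simp: field_simps power2_eq_square)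
qed

lemma SL2_triangular_factors_of_diagonal:
  assumes "\<kappa>1 \<noteq> 0" "\<kappa>2 \<noteq> 0" "t1 = \<kappa>1 + inverse \<kappa>1" "t2 = \<kappa>2 + inverse \<kappa>2"
    "a1 \<in> SL2_tr t1" "a2 \<in> SL2_tr t2" "a1 ** a2 = matD l" "l \<noteq> 1" "l \<noteq> -1" "a1 $ 1 $ 2 = 0"
  shows "l \<in> {\<kappa>1 * \<kappa>2, \<kappa>1 * inverse \<kappa>2, inverse \<kappa>1 * \<kappa>2, inverse \<kappa>1 * inverse \<kappa>2}"
proof -
  from assms(5-9) obtain a b c d where a1: "a1 = mat2 a b c d"
    and a2: "a2 = mat2 (d * l) (- b * inverse l) (- c * l) (a * inverse l)"
    and det: "a*d - b*c = 1" and tr: "a + d = t1" and "l \<noteq> 0"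
    by (rule SL2_factors_of_diagonal)
  from det assms(10) have "a * d = 1"
    by (simp add: a1)
  then have "a \<noteq> 0" "d = inverse a"
    by (auto intro: inverse_unique[symmetric])
  with tr assms(1,3) have a_cases: "a = \<kappa>1 \<or> a = inverse \<kappa>1"
    by (simp add: plus_inverse_eq_plus_inverse_iff)
  define e where "e = d * l"
  have "e + inverse e = t2"
    using assms(6) \<open>d = inverse a\<close> by (simp add: a2 e_def mult.commute)
  with assms(2,4) \<open>l \<noteq> 0\<close> \<open>a \<noteq> 0\<close> \<open>d = inverse a\<close> have "e = \<kappa>2 \<or> e = inverse \<kappa>2"
    using plus_inverse_eq_plus_inverse_iff[of e \<kappa>2] by (simp add: e_def)
  moreover have "l = a * e"
    using \<open>a \<noteq> 0\<close> \<open>d = inverse a\<close> by (simp add: e_def)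
  ultimately show ?thesis
    using a_cases by auto
qed

lemma SL2_factors_of_generic_diagonal:
  assumes "\<kappa>1 \<noteq> 0" "\<kappa>2 \<noteq> 0" "t1 = \<kappa>1 + inverse \<kappa>1" "t2 = \<kappa>2 + inverse \<kappa>2"
    "a1 \<in> SL2_tr t1" "a2 \<in> SL2_tr t2" "a1 ** a2 = matD l"
    "l \<notin> {1, -1, \<kappa>1 * \<kappa>2, \<kappa>1 * inverse \<kappa>2, inverse \<kappa>1 * \<kappa>2, inverse \<kappa>1 * inverse \<kappa>2}"
  shows "\<exists>\<mu>. \<mu> \<noteq> 0 \<and> a1 = matH l t1 t2 (- l * \<mu>) \<and> a2 = matH l t2 t1 \<mu>"
proof -
  from assms(8) have "l \<noteq> 1" "l \<noteq> -1"
    by auto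
  with assms(5-7) obtain a b c d where a1: "a1 = mat2 a b c d"
    and a2: "a2 = mat2 (d * l) (- b * inverse l) (- c * l) (a * inverse l)"
    and det: "a*d - b*c = 1" and "l \<noteq> 0" and z: "l - inverse l \<noteq> 0"
    and diag: "a * (l - inverse l) = l * t1 - t2" "d * (l - inverse l) = t2 - inverse l * t1"
    by (rule SL2_factors_of_diagonal)
  have "b \<noteq> 0"
    using SL2_triangular_factors_of_diagonal[OF assms(1-7) \<open>l \<noteq> 1\<close> \<open>l \<noteq> -1\<close>] assms(8)
    by (auto simp: a1)
  define \<mu> where "\<mu> = - b * inverse l * (l - inverse l)"
  have "a1 = matH l t1 t2 (b * (l - inverse l))"
    unfolding a1 using z diag det \<open>b \<noteq> 0\<close> by (rule mat2_eq_matH)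
  moreover have "- l * \<mu> = b * (l - inverse l)"
    using \<open>l \<noteq> 0\<close> by (simp add: \<mu>_def field_simps)
  moreover have "a2 = matH l t2 t1 \<mu>"
  proof -
    have e: "(d * l) * (l - inverse l) = l * t2 - t1"
      using arg_cong[OF diag(2), of "(*) l"] \<open>l \<noteq> 0\<close> by (simp add: field_simps)
    have h: "(a * inverse l) * (l - inverse l) = t1 - inverse l * t2"
      using arg_cong[OF diag(1), of "(*) (inverse l)"] \<open>l \<noteq> 0\<close> by (simp add: field_simps)
    have "(d * l) * (a * inverse l) - (- b * inverse l) * (- c * l) = 1"
      using det \<open>l \<noteq> 0\<close> by (simp add: field_simps)
    moreover have "- b * inverse l \<noteq> 0"
      using \<open>b \<noteq> 0\<close> \<open>l \<noteq> 0\<close> by simp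
    ultimately show ?thesis
      unfolding a2 \<mu>_def using mat2_eq_matH[OF z e h] by simp
  qed
  moreover have "\<mu> \<noteq> 0"
    using \<open>b \<noteq> 0\<close> \<open>l \<noteq> 0\<close> z by (simp add: \<mu>_def)
  ultimately show ?thesis
    by metis
qed

lemma SL2_factors_of_special_diagonal:
  assumes "k1 \<noteq> 0" "k2 \<noteq> 0" "t1 = k1 + inverse k1" "t2 = k2 + inverse k2"
    "a1 \<in> SL2_tr t1" "a2 \<in> SL2_tr t2" "a1 ** a2 = matD (k1 * k2)" "k1 * k2 \<noteq> 1" "k1 * k2 \<noteq> -1"
  shows "(\<exists>\<alpha>. a1 = uplus k1 (- k1 * \<alpha>) \<and> a2 = uplus k2 (inverse k2 * \<alpha>))
       \<or> (\<exists>\<alpha>. a1 = uminus2 k1 (- inverse k1 * \<alpha>) \<and> a2 = uminus2 k2 (k2 * \<alpha>))"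
proof -
  from assms(5-9) obtain a b c d where a1: "a1 = mat2 a b c d"
    and a2: "a2 = mat2 (d * (k1 * k2)) (- b * inverse (k1 * k2)) (- c * (k1 * k2)) (a * inverse (k1 * k2))"
    and det: "a*d - b*c = 1" and tr: "a + d = t1" and z: "k1 * k2 - inverse (k1 * k2) \<noteq> 0"
    and diag: "a * (k1 * k2 - inverse (k1 * k2)) = k1 * k2 * t1 - t2"
    by (rule SL2_factors_of_diagonal)
  have "k1 * k2 * t1 - t2 = k1 * (k1 * k2 - inverse (k1 * k2))"
    unfolding assms(3,4) using assms(1,2) by (simp add: field_simps)
  with diag z have "a = k1"
    by simp
  with tr assms(3) have "d = inverse k1"
    by simp
  with det \<open>a = k1\<close> assms(1) have "b = 0 \<or> c = 0"
    by simp
  then show ?thesis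
  proof
    assume "c = 0"
    then have "a1 = uplus k1 (- k1 * (- b / k1)) \<and> a2 = uplus k2 (inverse k2 * (- b / k1))"
      using \<open>a = k1\<close> \<open>d = inverse k1\<close> assms(1,2) by (simp add: a1 a2 uplus_def field_simps)
    then show ?thesis
      by blast
  next
    assume "b = 0"
    then have "a1 = uminus2 k1 (- inverse k1 * (- c * k1)) \<and> a2 = uminus2 k2 (k2 * (- c * k1))"
      using \<open>a = k1\<close> \<open>d = inverse k1\<close> assms(1,2) by (simp add: a1 a2 uminus2_def field_simps)
    then show ?thesis
      by blast
  qed
qed

lemma SL2_factors_of_neg_parabolic:
  assumes "a1 \<in> SL2_tr t1" "a2 \<in> SL2_tr t2" "a1 ** a2 = - matP"
  obtains a b d where "a1 = mat2 a b (t1 + t2) d" "a2 = mat2 (- d) (b - d) (t1 + t2) (t1 + t2 - a)"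
    "a*d - b*(t1 + t2) = 1" "a + d = t1"
proof -
  obtain a b c d where a1: "a1 = mat2 a b c d" by (rule mat2_cases)
  have det: "a*d - b*c = 1" and tr: "a + d = t1"
    using assms(1) by (simp_all add: a1)
  have a2: "a2 = mat2 (- d) (b - d) c (c - a)"
    using right_factor_eq_adjugate_mult[OF det assms(3)[unfolded a1]] by (simp add: matP_def)
  have "c - a - d = t2"
    using assms(2) by (simp add: a2)
  then have "c = t1 + t2"
    unfolding tr[symmetric] by (simp add: algebra_simps)
  with that a1 a2 det tr show thesis
    by simp
qed

lemma SL2_factors_of_neg_parabolic_opposite_traces:
  assumes "\<kappa>2 \<noteq> 0" "t2 = \<kappa>2 + inverse \<kappa>2"
    "a1 \<in> SL2_tr t1" "a2 \<in> SL2_tr t2" "a1 ** a2 = - matP" "t1 + t2 = 0"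
  shows "\<exists>\<xi> (\<epsilon>::int). \<epsilon> \<in> {1, -1} \<and>
    a1 = uplus (- (\<kappa>2 powi (- \<epsilon>))) \<xi> \<and> a2 = uplus (\<kappa>2 powi \<epsilon>) (\<xi> + \<kappa>2 powi \<epsilon>)"
proof -
  from assms(3-5) obtain a b d where "a1 = mat2 a b (t1 + t2) d"
    and "a2 = mat2 (- d) (b - d) (t1 + t2) (t1 + t2 - a)"
    and "a*d - b*(t1 + t2) = 1" and tr: "a + d = t1"
    by (rule SL2_factors_of_neg_parabolic)
  with assms(6) have a1: "a1 = mat2 a b 0 d" and a2: "a2 = mat2 (- d) (b - d) 0 (- a)"
    and det: "a * d = 1"
    by simp_all
  then have "d \<noteq> 0" "a = inverse d"
    by (auto intro: inverse_unique[symmetric] simp: mult.commute)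
  then have "- d + inverse (- d) = - (a + d)"
    by simp
  also have "\<dots> = \<kappa>2 + inverse \<kappa>2"
    using tr assms(2,6) by (simp add: add_eq_0_iff)
  finally have "- d + inverse (- d) = \<kappa>2 + inverse \<kappa>2" .
  with \<open>d \<noteq> 0\<close> assms(1) have "- d = \<kappa>2 \<or> - d = inverse \<kappa>2"
    using plus_inverse_eq_plus_inverse_iff[of "- d" \<kappa>2] by simp
  then obtain \<epsilon> :: int where "\<epsilon> \<in> {1, -1}" "\<kappa>2 powi \<epsilon> = - d"
    by (metis insertI1 insertI2 power_int_1_right power_int_minus1_right)
  with \<open>d \<noteq> 0\<close> \<open>a = inverse d\<close> have "a1 = uplus (- (\<kappa>2 powi (- \<epsilon>))) b"
    "a2 = uplus (\<kappa>2 powi \<epsilon>) (b + \<kappa>2 powi \<epsilon>)"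
    by (simp_all add: a1 a2 uplus_def power_int_minus)
  with \<open>\<epsilon> \<in> {1, -1}\<close> show ?thesis
    by blast
qed

lemma SL2_factors_of_neg_parabolic_generic:
  assumes "a1 \<in> SL2_tr t1" "a2 \<in> SL2_tr t2" "a1 ** a2 = - matP" "t1 + t2 \<noteq> 0"
  shows "\<exists>\<alpha>. a1 = matK t1 t2 (\<alpha> + (t1 + t2) / 2) \<and> a2 = matK t2 t1 \<alpha>"
proof -
  from assms(1-3) obtain a b d where a1: "a1 = mat2 a b (t1 + t2) d"
    and a2: "a2 = mat2 (- d) (b - d) (t1 + t2) (t1 + t2 - a)"
    and det: "a*d - b*(t1 + t2) = 1" and tr: "a + d = t1"
    by (rule SL2_factors_of_neg_parabolic)
  define \<alpha> where "\<alpha> = - d - t2/2"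
  have q1: "t1^2/4 - 1 - (\<alpha> + (t1 + t2)/2)^2 = a*d - 1"
    and q2: "t2^2/4 - 1 - \<alpha>^2 = a*d - 1 - d * (t1 + t2)"
    unfolding \<alpha>_def tr[symmetric] by (simp_all add: field_simps power2_eq_square)
  have b: "b = inverse (t1 + t2) * (a*d - 1)"
    using det assms(4) by (simp add: field_simps)
  then have "b - d = inverse (t1 + t2) * (a*d - 1 - d * (t1 + t2))"
    using assms(4) by (simp add: field_simps)
  with b have "a1 = matK t1 t2 (\<alpha> + (t1 + t2)/2)" "a2 = matK t2 t1 \<alpha>"
    unfolding a1 a2 matK_def mat2_eq_iff q1 q2 add.commute[of t2 t1]
    unfolding \<alpha>_def tr[symmetric] by (simp_all add: field_simps)
  then show ?thesis
    by blast
qed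

theorem mainTheorem3:
  fixes a1 a2 :: "complex^2^2" and \<kappa>1 \<kappa>2 t1 t2 :: complex
  assumes k1: "\<kappa>1 \<noteq> 0" and k2: "\<kappa>2 \<noteq> 0"
    and t1: "t1 = \<kappa>1 + inverse \<kappa>1" and t2: "t2 = \<kappa>2 + inverse \<kappa>2"
    and a1: "a1 \<in> SL2_tr t1" and a2: "a2 \<in> SL2_tr t2"
  shows
    "(\<forall>l. a1 ** a2 = matD l \<and>
          l \<notin> {1, -1, \<kappa>1 * \<kappa>2, \<kappa>1 * inverse \<kappa>2, inverse \<kappa>1 * \<kappa>2, inverse \<kappa>1 * inverse \<kappa>2}
        \<longrightarrow> (\<exists>\<mu>. \<mu> \<noteq> 0 \<and> a1 = matH l t1 t2 (- l * \<mu>) \<and> a2 = matH l t2 t1 \<mu>))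
   \<and> (\<forall>\<epsilon>1 \<epsilon>2 :: int. \<epsilon>1 \<in> {1, -1} \<and> \<epsilon>2 \<in> {1, -1} \<and>
          a1 ** a2 = matD (\<kappa>1 powi \<epsilon>1 * \<kappa>2 powi \<epsilon>2) \<and>
          \<kappa>1 powi \<epsilon>1 * \<kappa>2 powi \<epsilon>2 \<noteq> 1 \<and> \<kappa>1 powi \<epsilon>1 * \<kappa>2 powi \<epsilon>2 \<noteq> -1
        \<longrightarrow> (\<exists>\<alpha>. a1 = uplus (\<kappa>1 powi \<epsilon>1) (- (\<kappa>1 powi \<epsilon>1) * \<alpha>) \<and>
                  a2 = uplus (\<kappa>2 powi \<epsilon>2) (\<kappa>2 powi (- \<epsilon>2) * \<alpha>))
          \<or> (\<exists>\<alpha>. a1 = uminus2 (\<kappa>1 powi \<epsilon>1) (- (\<kappa>1 powi (- \<epsilon>1)) * \<alpha>) \<and>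
                  a2 = uminus2 (\<kappa>2 powi \<epsilon>2) (\<kappa>2 powi \<epsilon>2 * \<alpha>)))
   \<and> (a1 ** a2 = - matP \<and> t1 + t2 = 0
        \<longrightarrow> (\<exists>\<xi> (\<epsilon>::int). \<epsilon> \<in> {1, -1} \<and>
              a1 = uplus (- (\<kappa>2 powi (- \<epsilon>))) \<xi> \<and> a2 = uplus (\<kappa>2 powi \<epsilon>) (\<xi> + \<kappa>2 powi \<epsilon>)))
   \<and> (a1 ** a2 = - matP \<and> t1 + t2 \<noteq> 0
        \<longrightarrow> (\<exists>\<alpha>. a1 = matK t1 t2 (\<alpha> + (t1 + t2) / 2) \<and> a2 = matK t2 t1 \<alpha>))
   \<and> (reducible_pair a1 a2 \<longleftrightarrow>
        (trace (a1 ** a2))^2 - t1 * t2 * trace (a1 ** a2) + t1^2 + t2^2 - 4 = 0)"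
  apply (intro conjI allI impI)
  subgoal
    using SL2_factors_of_generic_diagonal[OF k1 k2 t1 t2 a1 a2] by blast
  subgoal for \<epsilon>1 \<epsilon>2
    using SL2_factors_of_special_diagonal[of "\<kappa>1 powi \<epsilon>1" "\<kappa>2 powi \<epsilon>2" t1 t2 a1 a2] k1 k2 t1 t2 a1 a2
    by (simp add: plus_inverse_power_int_sign power_int_minus)
  subgoal
    using SL2_factors_of_neg_parabolic_opposite_traces[OF k2 t2 a1 a2] by blast
  subgoal
    using SL2_factors_of_neg_parabolic_generic[OF a1 a2] by blast
  by (rule SL2_reducible_pair_iff_traces[OF a1 a2])

end
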